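(* Let $\gamma$ be an isophotic curve on a smooth oriented surface $M\subset E^3$ with $k_g\equiv 0$, nowhere-vanishing normal curvature, and whose position vector always lies in the plane spanned by $\{T,V\}$. Then $\gamma$ is a slant helix if and only if $\gamma$ is a rectifying curve.
   Context: For a unit speed curve $\gamma$ on an oriented surface $M\subset E^3$, the Darboux frame is $T=\gamma'$, $U$ = unit normal of $M$ along $\gamma$, $V = U\times T$, satisfying $T' = k_g V + k_n U$, $V' = -k_g T + \tau_g U$, $U' = -k_n T - \tau_g V$; here $k_g$, $k_n$, $\tau_g$ are the geodesic curvature, normal curvature and geodesic torsion. The curve $\gamma$ is an isophotic curve if there is a fixed unit vector $d$ and a constant angle $\phi$ with $\langle U, d\rangle = \cos\phi$ along $\gamma$. "Position vector lies in the plane spanned by $\{T,V\}$" means $\gamma(s) = \mu_1(s)T(s) + \mu_2(s)V(s)$ for differentiable functions $\mu_1,\mu_2$. With Frenet frame $\{T,N,B\}$, curvature $\kappa>0$ and torsion $\tau$: $\gamma$ is a slant helix if its principal normal $N$ makes a constant angle with a fixed direction (equivalently, $\frac{\kappa^2}{(\kappa^2+\tau^2)^{3/2}}(\tau/\kappa)'$ is constant); $\gamma$ is a rectifying curve if its position vector always lies in its rectifying plane $\mathrm{span}\{T,B\}$ (equivalently, $\tau/\kappa = c_1 s + c_2$ for constants $c_1\neq 0$, $c_2$). *)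

theory Defs
  imports "HOL-Analysis.Analysis"
begin

text \<open>Coinductive = greatest fixed point, i.e. derivatives of all orders exist.\<close>

coinductive smooth_on :: "'a::euclidean_space set \<Rightarrow> ('a \<Rightarrow> 'b::euclidean_space) \<Rightarrow> bool" where
  "\<lbrakk> f differentiable_on S;
     \<And>i. i \<in> Basis \<Longrightarrow> smooth_on S (\<lambda>x. frechet_derivative f (at x) i) \<rbrakk>
   \<Longrightarrow> smooth_on S f"

definition local_param :: "(real^3) set \<Rightarrow> (real^2 \<Rightarrow> real^3) \<Rightarrow> (real^2) set \<Rightarrow> (real^3) set \<Rightarrow> bool" where
  "local_param M X W Q \<longleftrightarrow>
     open W \<and> open Q \<and> smooth_on W X \<and>
     (\<exists>Y. homeomorphism W (M \<inter> Q) X Y) \<and>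
     (\<forall>w\<in>W. inj (frechet_derivative X (at w)))"

definition regular_surface :: "(real^3) set \<Rightarrow> bool" where
  "regular_surface M \<longleftrightarrow>
     (\<forall>p\<in>M. \<exists>X W Q. p \<in> Q \<and> local_param M X W Q)"

definition unit_normal_field :: "(real^3) set \<Rightarrow> (real^3 \<Rightarrow> real^3) \<Rightarrow> bool" where
  "unit_normal_field M n \<longleftrightarrow>
     continuous_on M n \<and> (\<forall>p\<in>M. norm (n p) = 1) \<and>
     (\<forall>X W Q. local_param M X W Q \<longrightarrow>
        (\<forall>w\<in>W. \<forall>v. inner (n (X w)) (frechet_derivative X (at w) v) = 0))"

definition oriented_surface :: "(real^3) set \<Rightarrow> (real^3 \<Rightarrow> real^3) \<Rightarrow> bool" where
  "oriented_surface M n \<longleftrightarrow> regular_surface M \<and> unit_normal_field M n"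

definition tangent :: "(real \<Rightarrow> real^3) \<Rightarrow> real \<Rightarrow> real^3" where
  "tangent \<gamma> s = vector_derivative \<gamma> (at s)"

definition unit_speed_curve_on :: "(real^3) set \<Rightarrow> (real \<Rightarrow> real^3) \<Rightarrow> real set \<Rightarrow> bool" where
  "unit_speed_curve_on M \<gamma> I \<longleftrightarrow>
     is_interval I \<and> open I \<and> I \<noteq> {} \<and> smooth_on I \<gamma> \<and>
     (\<forall>s\<in>I. \<gamma> s \<in> M \<and> norm (tangent \<gamma> s) = 1)"

definition darbouxU :: "(real^3 \<Rightarrow> real^3) \<Rightarrow> (real \<Rightarrow> real^3) \<Rightarrow> real \<Rightarrow> real^3" where
  "darbouxU n \<gamma> s = n (\<gamma> s)"

definition darbouxV :: "(real^3 \<Rightarrow> real^3) \<Rightarrow> (real \<Rightarrow> real^3) \<Rightarrow> real \<Rightarrow> real^3" where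
  "darbouxV n \<gamma> s = cross3 (darbouxU n \<gamma> s) (tangent \<gamma> s)"

text \<open>From T' = k_g V + k_n U: geodesic and normal curvature.\<close>

definition geodesic_curvature :: "(real^3 \<Rightarrow> real^3) \<Rightarrow> (real \<Rightarrow> real^3) \<Rightarrow> real \<Rightarrow> real" where
  "geodesic_curvature n \<gamma> s = inner (vector_derivative (tangent \<gamma>) (at s)) (darbouxV n \<gamma> s)"

definition normal_curvature :: "(real^3 \<Rightarrow> real^3) \<Rightarrow> (real \<Rightarrow> real^3) \<Rightarrow> real \<Rightarrow> real" where
  "normal_curvature n \<gamma> s = inner (vector_derivative (tangent \<gamma>) (at s)) (darbouxU n \<gamma> s)"

definition isophotic :: "(real^3 \<Rightarrow> real^3) \<Rightarrow> (real \<Rightarrow> real^3) \<Rightarrow> real set \<Rightarrow> bool" where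
  "isophotic n \<gamma> I \<longleftrightarrow>
     (\<exists>d \<phi>. norm d = 1 \<and> (\<forall>s\<in>I. inner (darbouxU n \<gamma> s) d = cos \<phi>))"

definition position_in_TV_plane :: "(real^3 \<Rightarrow> real^3) \<Rightarrow> (real \<Rightarrow> real^3) \<Rightarrow> real set \<Rightarrow> bool" where
  "position_in_TV_plane n \<gamma> I \<longleftrightarrow>
     (\<exists>\<mu>1 \<mu>2. (\<forall>s\<in>I. \<mu>1 differentiable (at s) \<and> \<mu>2 differentiable (at s)) \<and>
        (\<forall>s\<in>I. \<gamma> s = \<mu>1 s *\<^sub>R tangent \<gamma> s + \<mu>2 s *\<^sub>R darbouxV n \<gamma> s))"

definition curvature :: "(real \<Rightarrow> real^3) \<Rightarrow> real \<Rightarrow> real" where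
  "curvature \<gamma> s = norm (vector_derivative (tangent \<gamma>) (at s))"

definition principal_normal :: "(real \<Rightarrow> real^3) \<Rightarrow> real \<Rightarrow> real^3" where
  "principal_normal \<gamma> s = (1 / curvature \<gamma> s) *\<^sub>R vector_derivative (tangent \<gamma>) (at s)"

definition binormal :: "(real \<Rightarrow> real^3) \<Rightarrow> real \<Rightarrow> real^3" where
  "binormal \<gamma> s = cross3 (tangent \<gamma> s) (principal_normal \<gamma> s)"

definition slant_helix :: "(real \<Rightarrow> real^3) \<Rightarrow> real set \<Rightarrow> bool" where
  "slant_helix \<gamma> I \<longleftrightarrow>
     (\<exists>d c. norm d = 1 \<and> (\<forall>s\<in>I. inner (principal_normal \<gamma> s) d = c))"

definition rectifying_curve :: "(real \<Rightarrow> real^3) \<Rightarrow> real set \<Rightarrow> bool" where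
  "rectifying_curve \<gamma> I \<longleftrightarrow>
     (\<exists>a1 a2. \<forall>s\<in>I. \<gamma> s = a1 s *\<^sub>R tangent \<gamma> s + a2 s *\<^sub>R binormal \<gamma> s)"

end

(* With vanishing geodesic curvature the Darboux equation T' = k_g V + k_n U reduces to
   T' = k_n U, so the curvature is |k_n|, the principal normal is N = sgn(k_n) U and the
   binormal is B = -sgn(k_n) V.  Since k_n is continuous and nowhere zero on the interval I,
   its sign is constant.  Hence the isophotic condition <U, d> = cos phi makes <N, d>
   constant, i.e. the curve is a slant helix, and span{T, V} = span{T, B}, so a position
   vector in the TV-plane makes it a rectifying curve: both sides of the equivalence hold.
   The only genuinely geometric input is U _|_ T, which holds because a velocity of a curve
   in M is a limit of chords of M, and chords of M are asymptotically orthogonal to its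
   normal (seen through a local parametrisation). *)

theory Submission
  imports Defs
begin

lemma smooth_on_imp_differentiable_on: "smooth_on S f \<Longrightarrow> f differentiable_on S"
  by (erule smooth_on.cases) simp

lemma smooth_on_cong:
  assumes "open S" "smooth_on S f" "\<And>x. x \<in> S \<Longrightarrow> f x = g x"
  shows "smooth_on S g"
  using assms(2,3)
proof (coinduction arbitrary: f g rule: smooth_on.coinduct)
  case (smooth_on f g)
  from smooth_on(1) have "f differentiable_on S"
    and f': "\<And>i. i \<in> Basis \<Longrightarrow> smooth_on S (\<lambda>x. frechet_derivative f (at x) i)"
    by (auto elim: smooth_on.cases)
  then have f_at: "f differentiable at x" if "x \<in> S" for x
    using assms(1) that by (simp add: differentiable_on_eq_differentiable_at)
  have g': "frechet_derivative f (at x) = frechet_derivative g (at x)" if "x \<in> S" for x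
    using frechet_derivative_transform_within_open[OF f_at[OF that] assms(1) that] smooth_on(2)
    by simp
  have "g differentiable at x" if "x \<in> S" for x
  proof (rule differentiableI)
    show "(g has_derivative frechet_derivative f (at x)) (at x)"
      using has_derivative_transform_within_open[OF f_at[OF that, unfolded frechet_derivative_works] assms(1) that]
        smooth_on(2) by blast
  qed
  then have "g differentiable_on S"
    by (simp add: differentiable_on_eq_differentiable_at[OF assms(1)])
  moreover have "\<exists>f' g'. S = S \<and> (\<lambda>x. frechet_derivative g (at x) i) = g' \<and>
      smooth_on S f' \<and> (\<forall>x. x \<in> S \<longrightarrow> f' x = g' x)" if "i \<in> Basis" for i
    using f'[OF that] g'
    by (intro exI[of _ "\<lambda>x. frechet_derivative f (at x) i"] exI[of _ "\<lambda>x. frechet_derivative g (at x) i"]) simp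
  ultimately show ?case
    by (intro exI[of _ g] exI[of _ S]) simp
qed

lemma smooth_on_vector_derivative:
  fixes f :: "real \<Rightarrow> 'b::euclidean_space"
  assumes "open S" "smooth_on S f"
  shows "smooth_on S (\<lambda>x. vector_derivative f (at x))"
proof (rule smooth_on_cong[OF assms(1)])
  show "smooth_on S (\<lambda>x. frechet_derivative f (at x) 1)"
    using assms(2) by (auto elim: smooth_on.cases)
  show "frechet_derivative f (at x) 1 = vector_derivative f (at x)" if "x \<in> S" for x
  proof -
    have "f differentiable at x"
      using smooth_on_imp_differentiable_on[OF assms(2)] assms(1) that
      by (simp add: differentiable_on_eq_differentiable_at)
    then show ?thesis by (simp add: frechet_derivative_eq_vector_derivative)
  qed
qed

lemma smooth_on_has_vector_derivative:
  fixes f :: "real \<Rightarrow> 'b::euclidean_space"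
  assumes "open S" "smooth_on S f" "x \<in> S"
  shows "(f has_vector_derivative vector_derivative f (at x)) (at x)"
  using assms smooth_on_imp_differentiable_on
  by (metis differentiable_on_eq_differentiable_at vector_derivative_works)

lemma vector_derivative_orthogonal_if_norm_const:
  fixes f :: "real \<Rightarrow> 'a::real_inner"
  assumes "open S" "x \<in> S" "\<And>y. y \<in> S \<Longrightarrow> norm (f y) = c"
    and f': "(f has_vector_derivative f') (at x)"
  shows "f' \<bullet> f x = 0"
proof -
  have "((\<lambda>y. f y \<bullet> f y) has_derivative (\<lambda>h. f x \<bullet> (h *\<^sub>R f') + (h *\<^sub>R f') \<bullet> f x)) (at x)"
    using f' unfolding has_vector_derivative_def by (intro has_derivative_inner)
  moreover have "((\<lambda>y. f y \<bullet> f y) has_derivative (\<lambda>h. 0)) (at x)"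
    by (rule has_derivative_transform_within_open[OF has_derivative_const[of "c\<^sup>2"] assms(1,2)])
      (metis assms(3) power2_norm_eq_inner)
  ultimately have "(\<lambda>h. f x \<bullet> (h *\<^sub>R f') + (h *\<^sub>R f') \<bullet> f x) = (\<lambda>h. 0)"
    by (rule has_derivative_unique)
  then show ?thesis
    by (metis (no_types) inner_commute mult_2 scaleR_one mult_eq_0_iff zero_neq_numeral)
qed

lemma orthonormal_cross3_perp_parallel:
  fixes x u t :: "real^3"
  assumes "u \<bullet> u = 1" "t \<bullet> t = 1" "u \<bullet> t = 0" "x \<bullet> t = 0" "x \<bullet> cross3 u t = 0"
  shows "x = (x \<bullet> u) *\<^sub>R u"
proof -
  have "cross3 t (cross3 u t) = u"
    using Lagrange[of t u t] assms by (simp add: inner_commute)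
  then have "cross3 u x = - cross3 x (cross3 t (cross3 u t))"
    using cross_skew by metis
  also have "\<dots> = 0"
    using Lagrange[of x t "cross3 u t"] assms by simp
  finally have "cross3 u (cross3 u x) = 0" by simp
  then show ?thesis
    using Lagrange[of u u x] assms by (simp add: inner_commute)
qed

lemma continuous_nonzero_sgn_constant:
  fixes f :: "'a::topological_space \<Rightarrow> real"
  assumes "connected S" "continuous_on S f" "\<And>x. x \<in> S \<Longrightarrow> f x \<noteq> 0"
  obtains \<sigma> where "\<bar>\<sigma>\<bar> = 1" "\<And>x. x \<in> S \<Longrightarrow> sgn (f x) = \<sigma>"
proof (cases "S = {}")
  case False
  have "(\<lambda>x. sgn (f x)) ` S \<subseteq> {-1, 1}"
    using assms(3) by (auto simp: sgn_if)
  then have "(\<lambda>x. sgn (f x)) constant_on S"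
    using assms by (intro continuous_finite_range_constant continuous_on_sgn) (auto intro: finite_subset)
  then obtain \<sigma> where "\<And>x. x \<in> S \<Longrightarrow> sgn (f x) = \<sigma>"
    by (auto simp: constant_on_def)
  moreover from False obtain x where "x \<in> S" by blast
  ultimately show ?thesis
    using that assms(3) by (metis abs_sgn_eq_1)
qed (use that[of 1] in auto)

text \<open>A parametrisation-free notion of normal vector: to first order, \<open>M\<close> does not move
  away from \<open>p\<close> in the direction \<open>\<nu>\<close>.\<close>

definition normal_at :: "'a::real_inner set \<Rightarrow> 'a \<Rightarrow> 'a \<Rightarrow> bool" where
  "normal_at M p \<nu> \<longleftrightarrow>
     (\<forall>\<epsilon>>0. \<forall>\<^sub>F q in nhds p. q \<in> M \<longrightarrow> \<bar>\<nu> \<bullet> (q - p)\<bar> \<le> \<epsilon> * norm (q - p))"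

lemma normal_at_velocity_component_le:
  fixes \<gamma> :: "real \<Rightarrow> 'a::real_inner"
  assumes \<nu>: "normal_at M (\<gamma> s) \<nu>" and \<gamma>': "(\<gamma> has_vector_derivative v) (at s)"
    and in_M: "\<forall>\<^sub>F t in at s. \<gamma> t \<in> M" and "\<epsilon> > 0"
  shows "\<bar>\<nu> \<bullet> v\<bar> \<le> \<epsilon> * norm v"
proof (rule tendsto_le[OF trivial_limit_at _ tendsto_const])
  define r where "r t = \<gamma> t - \<gamma> s - (t - s) *\<^sub>R v" for t
  have r_lim: "((\<lambda>t. norm (r t) / \<bar>t - s\<bar>) \<longlongrightarrow> 0) (at s)"
    using \<gamma>' by (simp add: has_vector_derivative_def has_derivative_iff_norm r_def)
  show "((\<lambda>t. \<epsilon> * norm v + (\<epsilon> + norm \<nu>) * (norm (r t) / \<bar>t - s\<bar>)) \<longlongrightarrow> \<epsilon> * norm v) (at s)"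
    using tendsto_add[OF tendsto_const tendsto_mult[OF tendsto_const r_lim]] by simp
  have "\<forall>\<^sub>F q in nhds (\<gamma> s). q \<in> M \<longrightarrow> \<bar>\<nu> \<bullet> (q - \<gamma> s)\<bar> \<le> \<epsilon> * norm (q - \<gamma> s)"
    using \<nu> \<open>\<epsilon> > 0\<close> by (simp add: normal_at_def)
  moreover have "filterlim \<gamma> (nhds (\<gamma> s)) (at s)"
    using has_vector_derivative_continuous[OF \<gamma>'] by (simp add: isCont_def)
  ultimately have "\<forall>\<^sub>F t in at s. \<gamma> t \<in> M \<longrightarrow> \<bar>\<nu> \<bullet> (\<gamma> t - \<gamma> s)\<bar> \<le> \<epsilon> * norm (\<gamma> t - \<gamma> s)"
    by (rule eventually_compose_filterlim)
  with in_M have "\<forall>\<^sub>F t in at s. \<bar>\<nu> \<bullet> (\<gamma> t - \<gamma> s)\<bar> \<le> \<epsilon> * norm (\<gamma> t - \<gamma> s) \<and> t \<noteq> s"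
    by (auto elim: eventually_elim2 simp: eventually_at_filter)
  then show "\<forall>\<^sub>F t in at s. \<bar>\<nu> \<bullet> v\<bar> \<le> \<epsilon> * norm v + (\<epsilon> + norm \<nu>) * (norm (r t) / \<bar>t - s\<bar>)"
  proof eventually_elim
    case (elim t)
    then have "\<bar>t - s\<bar> > 0" by simp
    have \<gamma>_t: "\<gamma> t - \<gamma> s = (t - s) *\<^sub>R v + r t" by (simp add: r_def)
    then have "\<bar>t - s\<bar> * \<bar>\<nu> \<bullet> v\<bar> \<le> \<bar>\<nu> \<bullet> (\<gamma> t - \<gamma> s)\<bar> + \<bar>\<nu> \<bullet> r t\<bar>"
      by (simp add: inner_add_right abs_mult)
    also have "\<dots> \<le> \<epsilon> * (\<bar>t - s\<bar> * norm v + norm (r t)) + norm \<nu> * norm (r t)"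
    proof (intro add_mono)
      show "\<bar>\<nu> \<bullet> (\<gamma> t - \<gamma> s)\<bar> \<le> \<epsilon> * (\<bar>t - s\<bar> * norm v + norm (r t))"
        using elim \<open>\<epsilon> > 0\<close> \<gamma>_t norm_triangle_ineq[of "(t - s) *\<^sub>R v" "r t"]
        by (smt (verit, best) mult_left_mono norm_scaleR)
    qed (rule Cauchy_Schwarz_ineq2)
    finally show ?case
      using \<open>\<bar>t - s\<bar> > 0\<close> by (simp add: field_simps)
  qed
qed

lemma normal_at_orthogonal_velocity:
  fixes \<gamma> :: "real \<Rightarrow> 'a::real_inner"
  assumes "normal_at M (\<gamma> s) \<nu>" "(\<gamma> has_vector_derivative v) (at s)" "\<forall>\<^sub>F t in at s. \<gamma> t \<in> M"
  shows "\<nu> \<bullet> v = 0"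
proof -
  have "\<bar>\<nu> \<bullet> v\<bar> \<le> 0"
  proof (rule tendsto_le[OF trivial_limit_at_right_real _ tendsto_const])
    show "((\<lambda>\<epsilon>. \<epsilon> * norm v) \<longlongrightarrow> 0) (at_right 0)"
      by (auto intro!: tendsto_eq_intros)
    show "\<forall>\<^sub>F \<epsilon> in at_right 0. \<bar>\<nu> \<bullet> v\<bar> \<le> \<epsilon> * norm v"
      using eventually_at_right_less
      by (rule eventually_mono) (rule normal_at_velocity_component_le[OF assms])
  qed
  then show ?thesis by simp
qed

text \<open>Injectivity of \<open>D\<close> bounds \<open>norm (X z - X w)\<close> below by a multiple of \<open>norm (z - w)\<close>,
  whereas the \<open>\<nu>\<close>-component of \<open>X z - X w\<close> only sees the remainder of the linear approximation.\<close>

lemma has_derivative_inj_normal_component: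
  fixes X :: "'a::euclidean_space \<Rightarrow> 'b::euclidean_space"
  assumes X': "(X has_derivative D) (at w)" and "inj D" and \<nu>: "\<And>u. \<nu> \<bullet> D u = 0"
    and "\<epsilon> > 0"
  shows "\<forall>\<^sub>F z in nhds w. \<bar>\<nu> \<bullet> (X z - X w)\<bar> \<le> \<epsilon> * norm (X z - X w)"
proof -
  obtain c where c: "c > 0" "\<And>u. c * norm u \<le> norm (D u)"
    using linear_inj_bounded_below_pos[OF has_derivative_linear[OF X'] \<open>inj D\<close>] by blast
  define N where "N = norm \<nu> + 1"
  have "N > 0" by (simp add: N_def add_nonneg_pos)
  define e where "e = min (c / 2) (\<epsilon> * c / (2 * N))"
  have "e > 0" using c \<open>\<epsilon> > 0\<close> \<open>N > 0\<close> by (simp add: e_def)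
  then obtain \<delta> where "\<delta> > 0"
    and \<delta>: "\<And>z. norm (z - w) < \<delta> \<Longrightarrow> norm (X z - X w - D (z - w)) \<le> e * norm (z - w)"
    using X' by (auto simp: has_derivative_at_alt)
  have "\<bar>\<nu> \<bullet> (X z - X w)\<bar> \<le> \<epsilon> * norm (X z - X w)" if z: "norm (z - w) < \<delta>" for z
  proof -
    define r where "r = X z - X w - D (z - w)"
    have r: "norm r \<le> e * norm (z - w)" using \<delta>[OF z] by (simp add: r_def)
    have "c * norm (z - w) \<le> norm (X z - X w) + norm r"
      using c(2)[of "z - w"] norm_triangle_ineq4[of "X z - X w" r] by (simp add: r_def)
    moreover have "e * norm (z - w) \<le> c / 2 * norm (z - w)"
      unfolding e_def by (intro mult_right_mono min.cobounded1) simp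
    ultimately have lower: "c / 2 * norm (z - w) \<le> norm (X z - X w)"
      using r by linarith
    have "\<bar>\<nu> \<bullet> (X z - X w)\<bar> = \<bar>\<nu> \<bullet> r\<bar>"
      using \<nu> by (simp add: r_def inner_diff_right)
    also have "\<dots> \<le> N * norm r"
      using Cauchy_Schwarz_ineq2[of \<nu> r] by (simp add: N_def distrib_right add_increasing2)
    also have "\<dots> \<le> N * (e * norm (z - w))"
      using r \<open>N > 0\<close> by (intro mult_left_mono) auto
    also have "\<dots> \<le> N * (\<epsilon> * c / (2 * N) * norm (z - w))"
      unfolding e_def using \<open>N > 0\<close> by (intro mult_left_mono mult_right_mono min.cobounded2) auto
    also have "\<dots> = \<epsilon> * (c / 2 * norm (z - w))"
      using \<open>N > 0\<close> by (simp add: field_simps)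
    also have "\<dots> \<le> \<epsilon> * norm (X z - X w)"
      using lower \<open>\<epsilon> > 0\<close> by simp
    finally show ?thesis .
  qed
  then show ?thesis
    using \<open>\<delta> > 0\<close> by (auto simp: eventually_nhds_metric dist_norm)
qed

lemma local_param_normal_at:
  assumes param: "local_param M X W Q" and "w \<in> W"
    and \<nu>: "\<And>u. \<nu> \<bullet> frechet_derivative X (at w) u = 0"
  shows "normal_at M (X w) \<nu>"
  unfolding normal_at_def
proof (intro allI impI)
  fix \<epsilon> :: real assume "\<epsilon> > 0"
  obtain Y where hom: "homeomorphism W (M \<inter> Q) X Y"
    using param by (auto simp: local_param_def)
  have "open W" "open Q" "smooth_on W X" "inj (frechet_derivative X (at w))"
    using param \<open>w \<in> W\<close> by (auto simp: local_param_def)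
  then have "(X has_derivative frechet_derivative X (at w)) (at w)"
    using smooth_on_imp_differentiable_on \<open>w \<in> W\<close>
    by (metis differentiable_on_eq_differentiable_at frechet_derivative_works)
  then have flat: "\<forall>\<^sub>F z in nhds w. \<bar>\<nu> \<bullet> (X z - X w)\<bar> \<le> \<epsilon> * norm (X z - X w)"
    using has_derivative_inj_normal_component \<nu> \<open>inj _\<close> \<open>\<epsilon> > 0\<close> by blast
  have Xw: "X w \<in> M \<inter> Q" and YXw: "Y (X w) = w"
    using hom \<open>w \<in> W\<close> by (auto simp: homeomorphism_def)
  have "(Y \<longlongrightarrow> w) (at (X w) within M \<inter> Q)"
    using hom Xw YXw by (metis continuous_on_def homeomorphism_def)
  from eventually_compose_filterlim[OF flat this]
  have "\<forall>\<^sub>F q in nhds (X w). q \<noteq> X w \<longrightarrow> q \<in> M \<inter> Q \<longrightarrow>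
      \<bar>\<nu> \<bullet> (X (Y q) - X w)\<bar> \<le> \<epsilon> * norm (X (Y q) - X w)"
    by (simp add: eventually_at_filter)
  moreover have "\<forall>\<^sub>F q in nhds (X w). q \<in> Q"
    using \<open>open Q\<close> Xw by (simp add: eventually_nhds_in_open)
  ultimately show "\<forall>\<^sub>F q in nhds (X w). q \<in> M \<longrightarrow> \<bar>\<nu> \<bullet> (q - X w)\<bar> \<le> \<epsilon> * norm (q - X w)"
    by eventually_elim (use hom in \<open>auto simp: homeomorphism_def\<close>)
qed

lemma oriented_surface_normal_at:
  assumes "oriented_surface M n" "p \<in> M"
  shows "normal_at M p (n p)"
proof -
  obtain X W Q where "p \<in> Q" and param: "local_param M X W Q"
    using assms unfolding oriented_surface_def regular_surface_def by blast
  then obtain Y where "homeomorphism W (M \<inter> Q) X Y"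
    by (auto simp: local_param_def)
  then have "p \<in> X ` W"
    using \<open>p \<in> Q\<close> \<open>p \<in> M\<close> by (simp add: homeomorphism_def)
  then obtain w where "w \<in> W" "X w = p"
    by blast
  moreover have "\<And>u. n (X w) \<bullet> frechet_derivative X (at w) u = 0"
    using assms(1) param \<open>w \<in> W\<close> unfolding oriented_surface_def unit_normal_field_def by blast
  ultimately show ?thesis
    using local_param_normal_at[OF param] by blast
qed

lemma darbouxU_orthogonal_tangent:
  assumes "oriented_surface M n" "unit_speed_curve_on M \<gamma> I" "s \<in> I"
  shows "darbouxU n \<gamma> s \<bullet> tangent \<gamma> s = 0"
proof (rule normal_at_orthogonal_velocity)
  have I: "open I" "smooth_on I \<gamma>" "\<And>t. t \<in> I \<Longrightarrow> \<gamma> t \<in> M"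
    using assms(2) by (auto simp: unit_speed_curve_on_def)
  show "normal_at M (\<gamma> s) (darbouxU n \<gamma> s)"
    unfolding darbouxU_def using assms(1) I(3)[OF assms(3)] by (rule oriented_surface_normal_at)
  show "(\<gamma> has_vector_derivative tangent \<gamma> s) (at s)"
    unfolding tangent_def using I(1,2) assms(3) by (rule smooth_on_has_vector_derivative)
  show "\<forall>\<^sub>F t in at s. \<gamma> t \<in> M"
    using eventually_at_in_open'[OF I(1) assms(3)] by (rule eventually_mono) (rule I(3))
qed

lemma acceleration_eq_normal_curvature:
  assumes "oriented_surface M n" and curve: "unit_speed_curve_on M \<gamma> I" and "s \<in> I"
    and "geodesic_curvature n \<gamma> s = 0"
  shows "vector_derivative (tangent \<gamma>) (at s) = normal_curvature n \<gamma> s *\<^sub>R darbouxU n \<gamma> s"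
proof -
  have I: "open I" "smooth_on I (tangent \<gamma>)" "\<And>t. t \<in> I \<Longrightarrow> norm (tangent \<gamma> t) = 1"
    using curve smooth_on_vector_derivative
    by (auto simp: unit_speed_curve_on_def tangent_def[abs_def])
  have "darbouxU n \<gamma> s \<bullet> darbouxU n \<gamma> s = 1"
    using assms(1,3) curve
    by (auto simp: oriented_surface_def unit_normal_field_def unit_speed_curve_on_def
        darbouxU_def norm_eq_1)
  moreover have "tangent \<gamma> s \<bullet> tangent \<gamma> s = 1"
    using I(3) \<open>s \<in> I\<close> by (simp add: norm_eq_1)
  moreover have "vector_derivative (tangent \<gamma>) (at s) \<bullet> tangent \<gamma> s = 0"
    using I \<open>s \<in> I\<close> smooth_on_has_vector_derivative
    by (metis vector_derivative_orthogonal_if_norm_const)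
  moreover have "vector_derivative (tangent \<gamma>) (at s) \<bullet> cross3 (darbouxU n \<gamma> s) (tangent \<gamma> s) = 0"
    using assms(4) by (simp add: geodesic_curvature_def darbouxV_def)
  ultimately show ?thesis
    using orthonormal_cross3_perp_parallel darbouxU_orthogonal_tangent[OF assms(1-3)]
    by (simp add: normal_curvature_def)
qed

lemma principal_normal_eq_darbouxU:
  assumes "oriented_surface M n" and curve: "unit_speed_curve_on M \<gamma> I" and "s \<in> I"
    and "geodesic_curvature n \<gamma> s = 0" "normal_curvature n \<gamma> s \<noteq> 0"
  shows "principal_normal \<gamma> s = sgn (normal_curvature n \<gamma> s) *\<^sub>R darbouxU n \<gamma> s"
proof -
  have "norm (darbouxU n \<gamma> s) = 1"
    using assms(1,3) curve
    by (auto simp: oriented_surface_def unit_normal_field_def unit_speed_curve_on_def darbouxU_def)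
  then show ?thesis
    using acceleration_eq_normal_curvature[OF assms(1-4)] assms(5)
    by (simp add: principal_normal_def curvature_def sgn_if)
qed

lemma binormal_eq_darbouxV:
  assumes "oriented_surface M n" and "unit_speed_curve_on M \<gamma> I" and "s \<in> I"
    and "geodesic_curvature n \<gamma> s = 0" "normal_curvature n \<gamma> s \<noteq> 0"
  shows "binormal \<gamma> s = - sgn (normal_curvature n \<gamma> s) *\<^sub>R darbouxV n \<gamma> s"
  using principal_normal_eq_darbouxU[OF assms] cross_skew[of "tangent \<gamma> s" "darbouxU n \<gamma> s"]
  by (simp add: binormal_def darbouxV_def cross_mult_right)

lemma continuous_on_normal_curvature:
  assumes "oriented_surface M n" and curve: "unit_speed_curve_on M \<gamma> I"
  shows "continuous_on I (normal_curvature n \<gamma>)"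
proof -
  have I: "open I" "smooth_on I \<gamma>" "\<gamma> ` I \<subseteq> M"
    using curve by (auto simp: unit_speed_curve_on_def)
  have "smooth_on I (tangent \<gamma>)"
    using I smooth_on_vector_derivative by (simp add: tangent_def[abs_def])
  then have "smooth_on I (\<lambda>s. vector_derivative (tangent \<gamma>) (at s))"
    by (rule smooth_on_vector_derivative[OF I(1)])
  then have "continuous_on I (\<lambda>s. vector_derivative (tangent \<gamma>) (at s))"
    by (intro differentiable_imp_continuous_on smooth_on_imp_differentiable_on)
  moreover have "continuous_on I (\<lambda>s. n (\<gamma> s))"
  proof (rule continuous_on_compose2[OF _ _ I(3)])
    show "continuous_on M n"
      using assms(1) by (simp add: oriented_surface_def unit_normal_field_def)
    show "continuous_on I \<gamma>"
      using I(2) by (intro differentiable_imp_continuous_on smooth_on_imp_differentiable_on)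
  qed
  ultimately show ?thesis
    unfolding normal_curvature_def[abs_def] darbouxU_def by (rule continuous_on_inner)
qed

lemma isophotic_imp_slant_helix:
  assumes "isophotic n \<gamma> I" "\<And>s. s \<in> I \<Longrightarrow> principal_normal \<gamma> s = \<sigma> *\<^sub>R darbouxU n \<gamma> s"
  shows "slant_helix \<gamma> I"
proof -
  obtain d \<phi> where "norm d = 1" "\<And>s. s \<in> I \<Longrightarrow> darbouxU n \<gamma> s \<bullet> d = cos \<phi>"
    using assms(1) unfolding isophotic_def by blast
  then have "norm d = 1 \<and> (\<forall>s\<in>I. principal_normal \<gamma> s \<bullet> d = \<sigma> * cos \<phi>)"
    using assms(2) by simp
  then show ?thesis
    unfolding slant_helix_def by blast
qed

lemma position_in_TV_plane_imp_rectifying: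
  assumes "position_in_TV_plane n \<gamma> I"
    and "\<And>s. s \<in> I \<Longrightarrow> binormal \<gamma> s = c s *\<^sub>R darbouxV n \<gamma> s" "\<And>s. s \<in> I \<Longrightarrow> c s \<noteq> 0"
  shows "rectifying_curve \<gamma> I"
proof -
  obtain \<mu>1 \<mu>2 where \<mu>: "\<And>s. s \<in> I \<Longrightarrow> \<gamma> s = \<mu>1 s *\<^sub>R tangent \<gamma> s + \<mu>2 s *\<^sub>R darbouxV n \<gamma> s"
    using assms(1) unfolding position_in_TV_plane_def by blast
  have "(\<mu>2 s / c s) *\<^sub>R binormal \<gamma> s = \<mu>2 s *\<^sub>R darbouxV n \<gamma> s" if "s \<in> I" for s
    using assms(2,3)[OF that] by simp
  then show ?thesis
    unfolding rectifying_curve_def using \<mu>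
    by (intro exI[of _ \<mu>1] exI[of _ "\<lambda>s. \<mu>2 s / c s"]) simp
qed

theorem theorem4p4:
  fixes M :: "(real^3) set" and n :: "real^3 \<Rightarrow> real^3"
    and \<gamma> :: "real \<Rightarrow> real^3" and I :: "real set"
  assumes "oriented_surface M n"
    and "unit_speed_curve_on M \<gamma> I"
    and "isophotic n \<gamma> I"
    and "\<forall>s\<in>I. geodesic_curvature n \<gamma> s = 0"
    and "\<forall>s\<in>I. normal_curvature n \<gamma> s \<noteq> 0"
    and "position_in_TV_plane n \<gamma> I"
  shows "slant_helix \<gamma> I \<longleftrightarrow> rectifying_curve \<gamma> I"
proof -
  have "connected I"
    using assms(2) by (simp add: unit_speed_curve_on_def is_interval_connected)
  then obtain \<sigma> where "\<bar>\<sigma>\<bar> = 1" and \<sigma>: "\<And>s. s \<in> I \<Longrightarrow> sgn (normal_curvature n \<gamma> s) = \<sigma>"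
    using continuous_nonzero_sgn_constant continuous_on_normal_curvature[OF assms(1,2)] assms(5)
    by metis
  have "slant_helix \<gamma> I"
    using assms(3) principal_normal_eq_darbouxU[OF assms(1,2)] assms(4,5) \<sigma>
    by (intro isophotic_imp_slant_helix) auto
  moreover have "rectifying_curve \<gamma> I"
    using assms(6) binormal_eq_darbouxV[OF assms(1,2)] assms(4,5) \<sigma> \<open>\<bar>\<sigma>\<bar> = 1\<close>
    by (intro position_in_TV_plane_imp_rectifying[where c = "\<lambda>_. - \<sigma>"]) auto
  ultimately show ?thesis by simp
qed

end
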